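(* Let $\widehat{G}$ be a signed complete bigraph with bipartition $(X,Y)$. If $\widehat{G}$ has a signed simplicial edge, then $\widehat{G}$ is a chordal signed bigraph.
   Context: A signed graph is a finite simple graph each of whose edges is assigned a sign, positive or negative. A signed bigraph is a signed graph whose underlying graph is bipartite, with bipartition $(X,Y)$; it is a signed complete bigraph if the underlying graph is a complete bipartite graph. An induced subgraph is obtained by deleting vertices only (signs are inherited). A signed graph is positive if all its edges are positive. In a bigraph with bipartition $(X,Y)$, a subgraph $H$ is a biclique if every vertex of $V(H)\cap X$ is adjacent to every vertex of $V(H)\cap Y$. For an edge $uv$, $N(uv)=(N(u)\cup N(v))\setminus\{u,v\}$. An edge $uv$ of a signed bigraph is signed simplicial if $N(uv)$ induces a positive biclique. A signed bigraph $\widehat G$ is chordal (a chordal signed bigraph) if its edges can be ordered $e_1,\dots,e_m$ so that each $e_i$ is signed simplicial in the signed bigraph $\widehat G-\{e_1,\dots,e_{i-1}\}$ obtained by deleting these edges (but no vertices). *)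

theory Defs
  imports Main
begin

(* A signed bigraph with bipartition (X,Y): finite disjoint vertex classes X, Y,
   edge set E \<subseteq> X \<times> Y (the edge {x,y} with x \<in> X, y \<in> Y is stored as the pair (x,y)),
   and a sign function sg on edges (True = positive, False = negative). *)
definition signed_bigraph :: "'a set \<Rightarrow> 'a set \<Rightarrow> ('a \<times> 'a) set \<Rightarrow> bool" where
  "signed_bigraph X Y E \<longleftrightarrow> finite X \<and> finite Y \<and> X \<inter> Y = {} \<and> E \<subseteq> X \<times> Y"

definition complete_bigraph :: "'a set \<Rightarrow> 'a set \<Rightarrow> ('a \<times> 'a) set \<Rightarrow> bool" where
  "complete_bigraph X Y E \<longleftrightarrow> E = X \<times> Y"

definition nbr :: "('a \<times> 'a) set \<Rightarrow> 'a \<Rightarrow> 'a set" where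
  "nbr E v = {w. (v, w) \<in> E \<or> (w, v) \<in> E}"

definition edge_nbhd :: "('a \<times> 'a) set \<Rightarrow> 'a \<Rightarrow> 'a \<Rightarrow> 'a set" where
  "edge_nbhd E u v = (nbr E u \<union> nbr E v) - {u, v}"

definition induces_biclique :: "'a set \<Rightarrow> 'a set \<Rightarrow> ('a \<times> 'a) set \<Rightarrow> 'a set \<Rightarrow> bool" where
  "induces_biclique X Y E S \<longleftrightarrow> (\<forall>x \<in> S \<inter> X. \<forall>y \<in> S \<inter> Y. (x, y) \<in> E)"

definition induces_positive :: "('a \<times> 'a) set \<Rightarrow> ('a \<times> 'a \<Rightarrow> bool) \<Rightarrow> 'a set \<Rightarrow> bool" where
  "induces_positive E sg S \<longleftrightarrow> (\<forall>e \<in> E \<inter> (S \<times> S). sg e)"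

definition signed_simplicial ::
  "'a set \<Rightarrow> 'a set \<Rightarrow> ('a \<times> 'a) set \<Rightarrow> ('a \<times> 'a \<Rightarrow> bool) \<Rightarrow> 'a \<times> 'a \<Rightarrow> bool" where
  "signed_simplicial X Y E sg e \<longleftrightarrow> e \<in> E \<and>
     induces_biclique X Y E (edge_nbhd E (fst e) (snd e)) \<and>
     induces_positive E sg (edge_nbhd E (fst e) (snd e))"

(* edges ordered e_1..e_m (a list of all edges, without repetition) such that each e_i is
   signed simplicial in the graph with e_1..e_{i-1} deleted (vertices kept, signs inherited) *)
definition chordal_signed_bigraph ::
  "'a set \<Rightarrow> 'a set \<Rightarrow> ('a \<times> 'a) set \<Rightarrow> ('a \<times> 'a \<Rightarrow> bool) \<Rightarrow> bool" where
  "chordal_signed_bigraph X Y E sg \<longleftrightarrow>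
     (\<exists>es. distinct es \<and> set es = E \<and>
        (\<forall>i < length es. signed_simplicial X Y (E - set (take i es)) sg (es ! i)))"

end

(* Rank X with the simplicial edge's endpoint u first and Y with v first, and delete the edges
   of the complete bigraph in lexicographic order of their rank pairs (the order on pairs is
   that of HOL-Library.Product_Lexorder). When (a, b) is next, the remaining edges are those of
   rank at least that of (a, b), so the neighbourhood of (a, b) consists of the vertices of X
   ranked after a and those of Y ranked after b. These are still completely joined, and they
   avoid u and v, so they lie in N(uv) of the original graph, where every edge is positive. *)

theory Submission
  imports Defs "HOL-Library.Product_Lexorder"
begin

lemma in_set_drop_iff:
  "x \<in> set (drop i xs) \<longleftrightarrow> (\<exists>j. i \<le> j \<and> j < length xs \<and> xs ! j = x)"
proof
  assume "x \<in> set (drop i xs)"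
  then obtain k where "k < length xs - i" and "xs ! (i + k) = x"
    by (auto simp: in_set_conv_nth)
  then show "\<exists>j. i \<le> j \<and> j < length xs \<and> xs ! j = x"
    by (intro exI[of _ "i + k"]) auto
next
  assume "\<exists>j. i \<le> j \<and> j < length xs \<and> xs ! j = x"
  then obtain j where "i \<le> j" "j < length xs" "xs ! j = x"
    by blast
  then show "x \<in> set (drop i xs)"
    using nth_mem[of "j - i" "drop i xs"] by simp
qed

lemma set_drop_strict_sorted_key:
  fixes f :: "'a \<Rightarrow> 'b::linorder"
  assumes sorted: "sorted_wrt (<) (map f xs)" and i: "i < length xs"
  shows "set (drop i xs) = {x \<in> set xs. f (xs ! i) \<le> f x}"
proof -
  have less: "f (xs ! k) < f (xs ! l)" if "k < l" "l < length xs" for k l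
    using sorted_wrt_nth_less[OF sorted, of k l] that by simp
  have index_le_iff: "i \<le> j \<longleftrightarrow> f (xs ! i) \<le> f (xs ! j)" if "j < length xs" for j
    using less[of i j] less[of j i] i that by (cases i j rule: linorder_cases) auto
  show ?thesis
  proof (intro set_eqI iffI)
    fix x assume "x \<in> set (drop i xs)"
    then obtain j where "i \<le> j" "j < length xs" "xs ! j = x"
      by (auto simp: in_set_drop_iff)
    with index_le_iff show "x \<in> {x \<in> set xs. f (xs ! i) \<le> f x}"
      by auto
  next
    fix x assume "x \<in> {x \<in> set xs. f (xs ! i) \<le> f x}"
    then obtain j where "j < length xs" "xs ! j = x" "f (xs ! i) \<le> f x"
      by (auto simp: in_set_conv_nth)
    with index_le_iff show "x \<in> set (drop i xs)"
      by (auto simp: in_set_drop_iff)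
  qed
qed

lemma set_diff_take_eq_set_drop:
  assumes "distinct xs"
  shows "set xs - set (take i xs) = set (drop i xs)"
proof -
  have "set xs = set (take i xs) \<union> set (drop i xs)"
    by (metis append_take_drop_id set_append)
  with set_take_disj_set_drop_if_distinct[OF assms order.refl] show ?thesis
    by blast
qed

lemma chordal_signed_bigraphI:
  fixes r :: "'a \<times> 'a \<Rightarrow> 'b::linorder"
  assumes "finite E" and "inj_on r E"
    and simplicial: "\<And>e. e \<in> E \<Longrightarrow> signed_simplicial X Y {e' \<in> E. r e \<le> r e'} sg e"
  shows "chordal_signed_bigraph X Y E sg"
proof -
  interpret folding_insort_key "(\<le>)" "(<)" E r
    by unfold_locales (fact \<open>inj_on r E\<close>)
  obtain es where sorted: "sorted_wrt (<) (map r es)" and set_es: "set es = E"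
    using finite_set_strict_sorted[OF order.refl \<open>finite E\<close>] by metis
  have "distinct es"
    using sorted by (simp add: strict_sorted_iff distinct_map)
  moreover have "signed_simplicial X Y (E - set (take i es)) sg (es ! i)" if "i < length es" for i
    using simplicial[of "es ! i"] set_drop_strict_sorted_key[OF sorted that]
      set_diff_take_eq_set_drop[OF \<open>distinct es\<close>] set_es that
    by auto
  ultimately show ?thesis
    unfolding chordal_signed_bigraph_def using set_es by blast
qed

lemma edge_nbhd_complete_bigraph:
  assumes "X \<inter> Y = {}" and "u \<in> X" and "v \<in> Y"
  shows "edge_nbhd (X \<times> Y) u v = (X - {u}) \<union> (Y - {v})"
  using assms unfolding edge_nbhd_def nbr_def by auto

lemma positive_off_signed_simplicial_edge:
  assumes "X \<inter> Y = {}" and "signed_simplicial X Y (X \<times> Y) sg (u, v)"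
    and "a \<in> X - {u}" and "b \<in> Y - {v}"
  shows "sg (a, b)"
  using assms edge_nbhd_complete_bigraph[OF assms(1)]
  unfolding signed_simplicial_def induces_positive_def by auto

lemma edge_nbhd_upper_edges:
  fixes X Y :: "'a set" and a b :: 'a
    and rx :: "'a \<Rightarrow> 'b::linorder" and ry :: "'a \<Rightarrow> 'c::linorder"
  defines "H \<equiv> {e' \<in> X \<times> Y. map_prod rx ry (a, b) \<le> map_prod rx ry e'}"
  assumes disjoint: "X \<inter> Y = {}" and inj: "inj_on rx X" "inj_on ry Y" and ab: "a \<in> X" "b \<in> Y"
  shows "edge_nbhd H a b \<inter> X \<subseteq> {a' \<in> X. rx a < rx a'}"
    and "edge_nbhd H a b \<inter> Y \<subseteq> {b' \<in> Y. ry b < ry b'}"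
proof -
  have H: "H \<subseteq> X \<times> Y"
    unfolding H_def by blast
  show "edge_nbhd H a b \<inter> X \<subseteq> {a' \<in> X. rx a < rx a'}"
  proof
    fix a' assume a': "a' \<in> edge_nbhd H a b \<inter> X"
    then have "(a', b) \<in> H" and "a' \<noteq> a"
      using H disjoint ab unfolding edge_nbhd_def nbr_def by auto
    then have "rx a \<le> rx a'" and "rx a \<noteq> rx a'"
      using inj(1) a' ab inj_on_eq_iff unfolding H_def by fastforce+
    with a' show "a' \<in> {a' \<in> X. rx a < rx a'}"
      by simp
  qed
  show "edge_nbhd H a b \<inter> Y \<subseteq> {b' \<in> Y. ry b < ry b'}"
  proof
    fix b' assume b': "b' \<in> edge_nbhd H a b \<inter> Y"
    then have "(a, b') \<in> H" and "b' \<noteq> b"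
      using H disjoint ab unfolding edge_nbhd_def nbr_def by auto
    then have "ry b \<le> ry b'" and "ry b \<noteq> ry b'"
      using inj(2) b' ab inj_on_eq_iff unfolding H_def by fastforce+
    with b' show "b' \<in> {b' \<in> Y. ry b < ry b'}"
      by simp
  qed
qed

lemma signed_simplicial_upper_edges:
  fixes X Y :: "'a set" and a b :: 'a
    and rx :: "'a \<Rightarrow> 'b::linorder" and ry :: "'a \<Rightarrow> 'c::linorder"
  defines "H \<equiv> {e' \<in> X \<times> Y. map_prod rx ry (a, b) \<le> map_prod rx ry e'}"
  assumes disjoint: "X \<inter> Y = {}" and simplicial: "signed_simplicial X Y (X \<times> Y) sg (u, v)"
    and inj: "inj_on rx X" "inj_on ry Y"
    and least: "\<forall>a'\<in>X. rx u \<le> rx a'" "\<forall>b'\<in>Y. ry v \<le> ry b'"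
    and ab: "a \<in> X" "b \<in> Y"
  shows "signed_simplicial X Y H sg (a, b)"
proof -
  note nbhd = edge_nbhd_upper_edges[OF disjoint inj ab, folded H_def]
  have "induces_biclique X Y H (edge_nbhd H a b)"
    unfolding induces_biclique_def
  proof (intro ballI)
    fix a' b' assume "a' \<in> edge_nbhd H a b \<inter> X" and "b' \<in> edge_nbhd H a b \<inter> Y"
    with nbhd(1,2) show "(a', b') \<in> H"
      unfolding H_def by auto
  qed
  moreover have "induces_positive H sg (edge_nbhd H a b)"
    unfolding induces_positive_def
  proof
    fix e assume "e \<in> H \<inter> edge_nbhd H a b \<times> edge_nbhd H a b"
    then obtain a' b' where "e = (a', b')" "a' \<in> edge_nbhd H a b \<inter> X" "b' \<in> edge_nbhd H a b \<inter> Y"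
      unfolding H_def by auto
    moreover from this nbhd(1,2) have "rx a < rx a'" "ry b < ry b'"
      by auto
    with ab least have "a' \<noteq> u" "b' \<noteq> v"
      by auto
    ultimately show "sg e"
      using positive_off_signed_simplicial_edge[OF disjoint simplicial] by auto
  qed
  moreover have "(a, b) \<in> H"
    unfolding H_def using ab by simp
  ultimately show ?thesis
    unfolding signed_simplicial_def by simp
qed

lemma ex_inj_on_nat_least:
  assumes "finite A"
  obtains f :: "'a \<Rightarrow> nat" where "inj_on f A" and "\<forall>a\<in>A. f u \<le> f a"
proof -
  obtain g :: "'a \<Rightarrow> nat" where "inj_on g A"
    using finite_imp_inj_to_nat_seg[OF assms] by blast
  then have "inj_on (\<lambda>a. if a = u then 0 else Suc (g a)) A"
    by (auto simp: inj_on_def)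
  then show ?thesis
    using that by auto
qed

theorem lemma2p1:
  fixes X Y :: "'a set" and E :: "('a \<times> 'a) set" and sg :: "'a \<times> 'a \<Rightarrow> bool"
  assumes "signed_bigraph X Y E"
    and "complete_bigraph X Y E"
    and "\<exists>e. signed_simplicial X Y E sg e"
  shows "chordal_signed_bigraph X Y E sg"
proof -
  have finite: "finite X" "finite Y" and disjoint: "X \<inter> Y = {}" and E: "E = X \<times> Y"
    using assms(1,2) unfolding signed_bigraph_def complete_bigraph_def by auto
  obtain u v where simplicial: "signed_simplicial X Y (X \<times> Y) sg (u, v)"
    using assms(3) E by auto
  obtain rx :: "'a \<Rightarrow> nat" where rx: "inj_on rx X" "\<forall>a\<in>X. rx u \<le> rx a"
    using ex_inj_on_nat_least[OF finite(1)] by blast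
  obtain ry :: "'a \<Rightarrow> nat" where ry: "inj_on ry Y" "\<forall>b\<in>Y. ry v \<le> ry b"
    using ex_inj_on_nat_least[OF finite(2)] by blast
  show ?thesis
    unfolding E
  proof (rule chordal_signed_bigraphI[where r = "map_prod rx ry"])
    show "finite (X \<times> Y)"
      using finite by simp
    show "inj_on (map_prod rx ry) (X \<times> Y)"
      using rx(1) ry(1) by (rule map_prod_inj_on)
    fix e assume "e \<in> X \<times> Y"
    then obtain a b where e: "e = (a, b)" and "a \<in> X" "b \<in> Y"
      by blast
    show "signed_simplicial X Y {e' \<in> X \<times> Y. map_prod rx ry e \<le> map_prod rx ry e'} sg e"
      unfolding e using disjoint simplicial rx(1) ry(1) rx(2) ry(2) \<open>a \<in> X\<close> \<open>b \<in> Y\<close>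
      by (rule signed_simplicial_upper_edges)
  qed
qed

end
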